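(* Let $\Bbbk$ be a field of characteristic $2$, $G=\langle\sigma\rangle$ cyclic of order $4$ acting on $V=V_3$ with $\sigma x_1=x_1+x_2$, $\sigma x_2=x_2+x_3$, $\sigma x_3=x_3$ on the dual basis, and $A=\Bbbk[N^G(x_1),\ x_2(x_2+x_3),\ x_3]$ with $N^G(x_1)=\prod_{i=0}^3\sigma^i(x_1)$. Then $K_4=\ker(\Delta^4)=\Bbbk[V]$ is a free $A$-module with basis $\{1,\ x_1,\ x_2,\ x_1^2,\ x_1x_2,\ x_1^3,\ x_1^2x_2,\ x_1^3x_2\}$.
   Context: $\Delta=\sigma-\iota\in\Bbbk G$ acting on $\Bbbk[V]=\Bbbk[x_1,x_2,x_3]$; note $\Delta^4=\sigma^4-\iota=0$ in characteristic $2$. *)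

theory Defs
  imports "HOL-Computational_Algebra.Polynomial"
begin

text \<open>The polynomial ring k[x1,x2,x3] is modelled as 'k poly poly poly:
  the innermost variable is x1, the middle one x2, the outermost one x3.\<close>

type_synonym 'k mpoly3 = "'k poly poly poly"

definition cst3 :: "'k::comm_ring_1 \<Rightarrow> 'k mpoly3" where
  "cst3 c = [:[:[:c:]:]:]"

definition X1 :: "'k::comm_ring_1 mpoly3" where "X1 = [:[:[:0, 1:]:]:]"
definition X2 :: "'k::comm_ring_1 mpoly3" where "X2 = [:[:0, 1:]:]"
definition X3 :: "'k::comm_ring_1 mpoly3" where "X3 = [:0, 1:]"

definition subst3 :: "'k::comm_ring_1 mpoly3 \<Rightarrow> 'k mpoly3 \<Rightarrow> 'k mpoly3 \<Rightarrow> 'k mpoly3 \<Rightarrow> 'k mpoly3" where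
  "subst3 p a b c =
     poly (map_poly (\<lambda>q. poly (map_poly (\<lambda>r. poly (map_poly cst3 r) a) q) b) p) c"

definition sigma :: "'k::comm_ring_1 mpoly3 \<Rightarrow> 'k mpoly3" where
  "sigma p = subst3 p (X1 + X2) (X2 + X3) X3"

definition Delta :: "'k::comm_ring_1 mpoly3 \<Rightarrow> 'k mpoly3" where
  "Delta p = sigma p - p"

definition K :: "nat \<Rightarrow> 'k::comm_ring_1 mpoly3 set" where
  "K n = {p. (Delta ^^ n) p = 0}"

definition norm_x1 :: "'k::comm_ring_1 mpoly3" where
  "norm_x1 = (\<Prod>i<4. (sigma ^^ i) X1)"

inductive_set gen_alg :: "'k::comm_ring_1 mpoly3 \<Rightarrow> 'k mpoly3 \<Rightarrow> 'k mpoly3 \<Rightarrow> 'k mpoly3 set"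
  for f g h where
  cst: "cst3 c \<in> gen_alg f g h"
| gen1: "f \<in> gen_alg f g h"
| gen2: "g \<in> gen_alg f g h"
| gen3: "h \<in> gen_alg f g h"
| add: "p \<in> gen_alg f g h \<Longrightarrow> q \<in> gen_alg f g h \<Longrightarrow> p + q \<in> gen_alg f g h"
| mult: "p \<in> gen_alg f g h \<Longrightarrow> q \<in> gen_alg f g h \<Longrightarrow> p * q \<in> gen_alg f g h"

definition algA :: "'k::comm_ring_1 mpoly3 set" where
  "algA = gen_alg norm_x1 (X2 * (X2 + X3)) X3"

definition basis8 :: "'k::comm_ring_1 mpoly3 list" where
  "basis8 = [1, X1, X2, X1^2, X1 * X2, X1^3, X1^2 * X2, X1^3 * X2]"

end

theory Submission
  imports Defs
begin

text \<open>In characteristic 2 we have \<open>\<Delta>\<^sup>2 = \<sigma>\<^sup>2 + 1\<close>, so \<open>\<Delta>\<^sup>4 = \<sigma>\<^sup>4 + 1 = 0\<close> and \<open>K\<^sub>4\<close> is all of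
  \<open>k[V]\<close>. For the basis, exchange \<open>x\<^sub>1\<close> and \<open>x\<^sub>3\<close>: then \<open>A\<close> becomes \<open>k[N, h, x\<^sub>1]\<close> where
  \<open>N = x\<^sub>3(x\<^sub>3 + x\<^sub>2)(x\<^sub>3 + x\<^sub>1)(x\<^sub>3 + x\<^sub>1 + x\<^sub>2)\<close> is monic of degree 4 in \<open>x\<^sub>3\<close> over \<open>k[x\<^sub>1, x\<^sub>2]\<close>
  and \<open>h = x\<^sub>2(x\<^sub>2 + x\<^sub>1)\<close> is monic of degree 2 in \<open>x\<^sub>2\<close> over \<open>k[x\<^sub>1]\<close>. If \<open>f \<in> R[t]\<close> is monic of
  degree \<open>d\<close>, then \<open>R[t]\<close> is a free \<open>R[f]\<close>-module with basis \<open>1, t, \<dots>, t\<^bsup>d - 1\<^esup>\<close>. Applying this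
  to \<open>N\<close> and then, coefficientwise, to \<open>h\<close> shows that the monomials \<open>x\<^sub>3\<^sup>a x\<^sub>2\<^sup>b\<close> with
  \<open>a < 4\<close>, \<open>b < 2\<close> form an \<open>A\<close>-basis; exchanging \<open>x\<^sub>1\<close> and \<open>x\<^sub>3\<close> back gives the eight monomials
  \<open>x\<^sub>1\<^sup>a x\<^sub>2\<^sup>b\<close>.\<close>

definition is_ring_hom :: "('a::comm_ring_1 \<Rightarrow> 'b::comm_ring_1) \<Rightarrow> bool" where
  "is_ring_hom g \<longleftrightarrow>
     (\<forall>x y. g (x + y) = g x + g y) \<and> (\<forall>x y. g (x * y) = g x * g y) \<and> g 0 = 0 \<and> g 1 = 1"

lemma is_ring_homD:
  assumes "is_ring_hom g"
  shows "g (x + y) = g x + g y" "g (x * y) = g x * g y" "g 0 = 0" "g 1 = 1"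
  using assms unfolding is_ring_hom_def by auto

lemma is_ring_hom_power:
  assumes "is_ring_hom g"
  shows "g (x ^ n) = g x ^ n"
  by (induction n) (simp_all add: is_ring_homD[OF assms])

lemma is_ring_hom_sum:
  assumes "is_ring_hom g"
  shows "g (sum f A) = (\<Sum>i\<in>A. g (f i))"
  by (induction A rule: infinite_finite_induct) (simp_all add: is_ring_homD[OF assms])

lemma is_ring_hom_comp: "is_ring_hom f \<Longrightarrow> is_ring_hom g \<Longrightarrow> is_ring_hom (f \<circ> g)"
  unfolding is_ring_hom_def by simp

lemma map_poly_add_hom:
  assumes "is_ring_hom g"
  shows "map_poly g (p + q) = map_poly g p + map_poly g q"
  by (rule poly_eqI) (simp add: coeff_map_poly is_ring_homD[OF assms])

lemma is_ring_hom_eval_map_poly: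
  assumes g: "is_ring_hom g"
  shows "is_ring_hom (\<lambda>p. poly (map_poly g p) x)"
proof -
  have g0: "g 0 = 0"
    by (rule is_ring_homD[OF g])
  have "poly (map_poly g (p * q)) x = poly (map_poly g p) x * poly (map_poly g q) x" for p q
  proof (induction p)
    case (pCons a p)
    have "map_poly g (smult a q) = smult (g a) (map_poly g q)"
      by (rule map_poly_smult) (simp_all add: is_ring_homD[OF g])
    with pCons show ?case
      by (simp add: map_poly_add_hom[OF g] map_poly_pCons[of g, OF g0] algebra_simps g0)
  qed simp
  then show ?thesis
    unfolding is_ring_hom_def by (simp add: map_poly_add_hom[OF g] g0 is_ring_homD[OF g])
qed

lemma two_eq_zero_CHAR_2: "CHAR('a::semiring_1) = 2 \<Longrightarrow> (2 :: 'a) = 0"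
  using of_nat_CHAR[where 'a='a] by simp

section \<open>Free bases\<close>

text \<open>Coordinates are required to vanish outside \<open>I\<close>, so that they are unique as functions.\<close>

definition free_basis :: "'a::comm_ring_1 set \<Rightarrow> 'i set \<Rightarrow> ('i \<Rightarrow> 'a) \<Rightarrow> bool" where
  "free_basis B I e \<longleftrightarrow>
     (\<forall>p. \<exists>!c. (\<forall>i\<in>I. c i \<in> B) \<and> (\<forall>i. i \<notin> I \<longrightarrow> c i = 0) \<and> p = (\<Sum>i\<in>I. c i * e i))"

lemma free_basisI:
  assumes diff: "\<And>x y. x \<in> B \<Longrightarrow> y \<in> B \<Longrightarrow> x - y \<in> B"
    and exists: "\<And>p. \<exists>c. (\<forall>i\<in>I. c i \<in> B) \<and> p = (\<Sum>i\<in>I. c i * e i)"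
    and indep: "\<And>c i. \<forall>i\<in>I. c i \<in> B \<Longrightarrow> (\<Sum>i\<in>I. c i * e i) = 0 \<Longrightarrow> i \<in> I \<Longrightarrow> c i = 0"
  shows "free_basis B I e"
  unfolding free_basis_def
proof
  fix p
  obtain c where c: "\<forall>i\<in>I. c i \<in> B" "p = (\<Sum>i\<in>I. c i * e i)"
    using exists by blast
  let ?c = "\<lambda>i. if i \<in> I then c i else 0"
  show "\<exists>!c. (\<forall>i\<in>I. c i \<in> B) \<and> (\<forall>i. i \<notin> I \<longrightarrow> c i = 0) \<and> p = (\<Sum>i\<in>I. c i * e i)"
  proof (rule ex1I[of _ ?c])
    show "(\<forall>i\<in>I. ?c i \<in> B) \<and> (\<forall>i. i \<notin> I \<longrightarrow> ?c i = 0) \<and> p = (\<Sum>i\<in>I. ?c i * e i)"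
      using c by simp
  next
    fix c'
    assume c': "(\<forall>i\<in>I. c' i \<in> B) \<and> (\<forall>i. i \<notin> I \<longrightarrow> c' i = 0) \<and> p = (\<Sum>i\<in>I. c' i * e i)"
    have "c' i - c i = 0" if "i \<in> I" for i
    proof (rule indep[OF _ _ that])
      show "\<forall>i\<in>I. c' i - c i \<in> B"
        using c c' diff by blast
      show "(\<Sum>i\<in>I. (c' i - c i) * e i) = 0"
        using c c' by (simp add: left_diff_distrib sum_subtractf)
    qed
    with c' show "c' = ?c"
      by auto
  qed
qed

lemma free_basis_reindex:
  assumes basis: "free_basis B I e" and bij: "bij_betw h J I" and e': "\<And>j. j \<in> J \<Longrightarrow> e' j = e (h j)"
  shows "free_basis B J e'"
  unfolding free_basis_def
proof
  fix p
  let ?P = "\<lambda>I e c. (\<forall>i\<in>I. c i \<in> B) \<and> (\<forall>i. i \<notin> I \<longrightarrow> c i = 0) \<and> p = (\<Sum>i\<in>I. c i * e i)"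
  let ?pull = "\<lambda>c j. if j \<in> J then c (h j) else 0"
  let ?push = "\<lambda>c i. if i \<in> I then c (inv_into J h i) else 0"
  have h: "h j \<in> I" "inv_into J h (h j) = j" if "j \<in> J" for j
    using bij that by (simp_all add: bij_betwE bij_betw_inv_into_left)
  have h_inv: "inv_into J h i \<in> J" if "i \<in> I" for i
    using bij_betwE[OF bij_betw_inv_into[OF bij]] that by blast
  have sum_pull: "(\<Sum>j\<in>J. c (h j) * e' j) = (\<Sum>i\<in>I. c i * e i)" for c
    using sum.reindex_bij_betw[OF bij, of "\<lambda>i. c i * e i"] e' by simp
  have "\<exists>!c. ?P I e c"
    using basis unfolding free_basis_def by (rule spec)
  then obtain c where c: "?P I e c" and c_unique: "\<And>c'. ?P I e c' \<Longrightarrow> c' = c"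
    by (elim ex1E) blast
  show "\<exists>!c. ?P J e' c"
  proof (rule ex1I[of _ "?pull c"])
    show "?P J e' (?pull c)"
      using c h sum_pull[of c] by simp
  next
    fix c'
    assume c': "?P J e' c'"
    have "p = (\<Sum>i\<in>I. ?push c' i * e i)"
      using c' h sum_pull[of "?push c'"] by simp
    with c' h_inv have "?P I e (?push c')"
      by simp
    then have "?push c' = c"
      by (rule c_unique)
    show "c' = ?pull c"
    proof
      fix j
      show "c' j = ?pull c j"
      proof (cases "j \<in> J")
        case True
        with h show ?thesis
          using fun_cong[OF \<open>?push c' = c\<close>, of "h j"] by simp
      qed (use c' in simp)
    qed
  qed
qed

lemma free_basis_image:
  assumes basis: "free_basis B I e" and hom: "is_ring_hom \<phi>" and bij: "bij \<phi>"
  shows "free_basis (\<phi> ` B) I (\<lambda>i. \<phi> (e i))"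
  unfolding free_basis_def
proof
  fix p
  let ?P = "\<lambda>p B e c. (\<forall>i\<in>I. c i \<in> B) \<and> (\<forall>i. i \<notin> I \<longrightarrow> c i = 0) \<and> p = (\<Sum>i\<in>I. c i * e i)"
  have inv_f: "inv \<phi> (\<phi> x) = x" for x
    by (rule inv_f_f[OF bij_is_inj[OF bij]])
  have f_inv: "\<phi> (inv \<phi> y) = y" for y
    by (rule surj_f_inv_f[OF bij_is_surj[OF bij]])
  have hom_sum: "\<phi> (\<Sum>i\<in>I. c i * e i) = (\<Sum>i\<in>I. \<phi> (c i) * \<phi> (e i))" for c
    by (simp add: is_ring_hom_sum[OF hom] is_ring_homD[OF hom])
  have "\<exists>!c. ?P (inv \<phi> p) B e c"
    using basis unfolding free_basis_def by (rule spec)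
  then obtain c where c: "?P (inv \<phi> p) B e c" and c_unique: "\<And>c'. ?P (inv \<phi> p) B e c' \<Longrightarrow> c' = c"
    by (elim ex1E) blast
  show "\<exists>!c. ?P p (\<phi> ` B) (\<lambda>i. \<phi> (e i)) c"
  proof (rule ex1I[of _ "\<lambda>i. \<phi> (c i)"])
    show "?P p (\<phi> ` B) (\<lambda>i. \<phi> (e i)) (\<lambda>i. \<phi> (c i))"
      using c f_inv[of p] hom_sum[of c] by (simp add: is_ring_homD[OF hom])
  next
    fix c'
    assume c': "?P p (\<phi> ` B) (\<lambda>i. \<phi> (e i)) c'"
    have "inv \<phi> p = inv \<phi> (\<phi> (\<Sum>i\<in>I. inv \<phi> (c' i) * e i))"
      using c' by (simp add: hom_sum f_inv)
    then have "inv \<phi> p = (\<Sum>i\<in>I. inv \<phi> (c' i) * e i)"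
      by (simp only: inv_f)
    moreover have "inv \<phi> 0 = 0"
      using inv_f[of 0] by (simp add: is_ring_homD[OF hom])
    ultimately have "?P (inv \<phi> p) B e (\<lambda>i. inv \<phi> (c' i))"
      using c' inv_f by auto
    then have "(\<lambda>i. inv \<phi> (c' i)) = c"
      by (rule c_unique)
    then show "c' = (\<lambda>i. \<phi> (c i))"
      using f_inv by auto
  qed
qed

section \<open>Expansion in powers of a monic polynomial\<close>

definition pcompose_combination :: "'a::comm_ring_1 poly \<Rightarrow> (nat \<Rightarrow> 'a poly) \<Rightarrow> 'a poly" where
  "pcompose_combination f q = (\<Sum>a<degree f. monom 1 a * pcompose (q a) f)"

lemma coeff_sum_monom_lessThan:
  "coeff (\<Sum>a<d. monom (c a) a) n = (if n < d then c n else 0)"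
  by (simp add: coeff_sum coeff_monom)

lemma degree_sum_monom_lessThan:
  assumes "d > 0"
  shows "degree (\<Sum>a<d. monom (c a) a) < d"
proof -
  have "degree (\<Sum>a<d. monom (c a) a) \<le> d - 1"
    by (rule degree_sum_le) (auto intro: order.trans[OF degree_monom_le])
  with assms show ?thesis
    by linarith
qed

lemma pcompose_combination_const:
  "pcompose_combination f (\<lambda>a. [:c a:]) = (\<Sum>a<degree f. monom (c a) a)"
  by (simp add: pcompose_combination_def monom_altdef)

lemma pcompose_combination_of_degree_less:
  assumes "degree p < degree f"
  shows "p = pcompose_combination f (\<lambda>a. [:coeff p a:])"
proof -
  have "p = (\<Sum>a<degree f. monom (coeff p a) a)"
    using assms by (intro poly_eqI) (auto simp: coeff_sum_monom_lessThan coeff_eq_0)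
  then show ?thesis
    by (simp add: pcompose_combination_const)
qed

lemma pcompose_combination_add_single:
  assumes "a < degree f"
  shows "pcompose_combination f (\<lambda>i. q i + (if i = a then r else 0))
           = pcompose_combination f q + monom 1 a * pcompose r f"
  using assms
  by (simp add: pcompose_combination_def pcompose_add distrib_left sum.distrib
      if_distrib[of "\<lambda>x. pcompose x f"] if_distrib[of "\<lambda>x. _ * x"] cong: if_cong)

lemma monic_leading_term:
  fixes f :: "'a::idom poly"
  assumes monic: "lead_coeff f = 1" and deg: "degree f > 0" and "c \<noteq> 0"
  shows "degree (monom 1 (n mod degree f) * pcompose (monom c (n div degree f)) f) = n"
      (is "degree ?g = n")
    and "lead_coeff (monom 1 (n mod degree f) * pcompose (monom c (n div degree f)) f) = c"
proof -
  define h where "h = pcompose (monom c (n div degree f)) f"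
  have "degree h = n div degree f * degree f" "lead_coeff h = c"
    unfolding h_def using monic lead_coeff_comp[OF deg, of "monom c (n div degree f)"] \<open>c \<noteq> 0\<close>
    by (simp_all add: degree_pcompose degree_monom_eq)
  moreover have "h \<noteq> 0"
    using \<open>lead_coeff h = c\<close> \<open>c \<noteq> 0\<close> by auto
  ultimately show "degree ?g = n" "lead_coeff ?g = c"
    unfolding h_def[symmetric] lead_coeff_mult by (simp_all add: degree_mult_eq degree_monom_eq)
qed

lemma pcompose_combination_exists:
  fixes f :: "'a::idom poly"
  assumes monic: "lead_coeff f = 1" and deg: "degree f > 0"
  shows "\<exists>q. p = pcompose_combination f q"
proof (induction "degree p" arbitrary: p rule: less_induct)
  case less
  show ?case
  proof (cases "degree p < degree f")
    case True
    then show ?thesis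
      using pcompose_combination_of_degree_less by blast
  next
    case False
    define n where "n = degree p"
    define c where "c = lead_coeff p"
    define a where "a = n mod degree f"
    define k where "k = n div degree f"
    \<comment> \<open>\<open>t\<^sup>a \<cdot> (c y\<^sup>k)(f)\<close> has the same leading term \<open>c t\<^sup>n\<close> as \<open>p\<close>\<close>
    define g where "g = monom 1 a * pcompose (monom c k) f"
    have "c \<noteq> 0"
      using deg False by (auto simp: c_def)
    then have deg_g: "degree g = n" and lead_g: "lead_coeff g = c"
      using monic_leading_term[OF monic deg] by (simp_all add: g_def a_def k_def)
    have "degree (p - g) < n"
    proof (cases "p - g = 0")
      case False
      have "degree (p - g) \<le> n" "coeff (p - g) n = 0"
        using deg_g lead_g by (simp_all add: n_def c_def degree_diff_le)
      with False show ?thesis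
        by (metis le_neq_implies_less leading_coeff_0_iff)
    qed (use deg False n_def in auto)
    then obtain q where "p - g = pcompose_combination f q"
      using less n_def by blast
    moreover have "a < degree f"
      using deg by (simp add: a_def)
    ultimately have "p = pcompose_combination f (\<lambda>i. q i + (if i = a then monom c k else 0))"
      by (simp add: pcompose_combination_add_single g_def algebra_simps)
    then show ?thesis
      by blast
  qed
qed

lemma pcompose_combination_pCons:
  "pcompose_combination f (\<lambda>a. pCons (c a) (q a))
     = (\<Sum>a<degree f. monom (c a) a) + f * pcompose_combination f q"
  by (simp add: pcompose_combination_def pcompose_pCons distrib_left sum.distrib sum_distrib_left
      monom_altdef ac_simps)

lemma monic_mult_add_low_degree_eq_0:
  fixes f :: "'a::idom poly"
  assumes monic: "lead_coeff f = 1" and deg: "degree f > 0"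
    and eq: "(\<Sum>a<degree f. monom (c a) a) + f * r = 0"
  shows "r = 0" "\<And>a. a < degree f \<Longrightarrow> c a = 0"
proof -
  have low: "degree (\<Sum>a<degree f. monom (c a) a) < degree f"
    using degree_sum_monom_lessThan[OF deg] .
  show "r = 0"
  proof (rule ccontr)
    assume "r \<noteq> 0"
    then have "degree (f * r) \<ge> degree f"
      using monic by (subst degree_mult_eq) auto
    moreover have "f * r = - (\<Sum>a<degree f. monom (c a) a)"
      using eq by (simp add: eq_neg_iff_add_eq_0 add.commute)
    ultimately show False
      using low by simp
  qed
  with eq show "c a = 0" if "a < degree f" for a
    using coeff_sum_monom_lessThan[where d="degree f" and c=c and n=a] that by simp
qed

lemma pcompose_combination_eq_0:
  fixes f :: "'a::idom poly"
  assumes monic: "lead_coeff f = 1" and deg: "degree f > 0"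
    and zero: "pcompose_combination f q = 0" and "a < degree f"
  shows "q a = 0"
proof -
  have "\<forall>q. (\<forall>a<degree f. q a \<noteq> 0 \<longrightarrow> degree (q a) < n) \<longrightarrow> pcompose_combination f q = 0
          \<longrightarrow> (\<forall>a<degree f. q a = 0)" for n
  proof (induction n)
    case (Suc n)
    show ?case
    proof (rule allI, intro impI)
      fix q :: "nat \<Rightarrow> 'a poly"
      assume deg_q: "\<forall>a<degree f. q a \<noteq> 0 \<longrightarrow> degree (q a) < Suc n"
        and zero: "pcompose_combination f q = 0"
      define c where "c a = coeff (q a) 0" for a
      define q' where "q' a = poly_shift 1 (q a)" for a
      have q_eq: "q = (\<lambda>a. pCons (c a) (q' a))"
        unfolding c_def q'_def
        by (intro ext poly_eqI) (simp add: coeff_pCons coeff_poly_shift split: nat.split)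
      have "(\<Sum>a<degree f. monom (c a) a) + f * pcompose_combination f q' = 0"
        using zero by (simp add: q_eq pcompose_combination_pCons)
      note low_high = monic_mult_add_low_degree_eq_0[OF monic deg this]
      have "\<forall>a<degree f. q' a \<noteq> 0 \<longrightarrow> degree (q' a) < n"
        using deg_q low_high(2) by (simp add: q_eq)
      with Suc.IH low_high show "\<forall>a<degree f. q a = 0"
        by (simp add: q_eq)
    qed
  qed simp
  from this[of "Suc (Max ((\<lambda>a. degree (q a)) ` {..<degree f}))"] show ?thesis
    using zero \<open>a < degree f\<close> by (auto simp: le_imp_less_Suc)
qed

definition adjoin :: "'a::comm_semiring_0 set \<Rightarrow> 'a poly \<Rightarrow> 'a poly set" where
  "adjoin S f = {pcompose Q f | Q. \<forall>j. coeff Q j \<in> S}"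

lemma in_adjoin_UNIV: "p \<in> adjoin UNIV f \<longleftrightarrow> (\<exists>Q. p = pcompose Q f)"
  by (simp add: adjoin_def)

lemma const_in_adjoin: "x \<in> S \<Longrightarrow> 0 \<in> S \<Longrightarrow> [:x:] \<in> adjoin S f"
  unfolding adjoin_def by (rule CollectI, rule exI[of _ "[:x:]"]) (simp add: coeff_pCons split: nat.split)

lemma zero_in_adjoin [simp]: "0 \<in> S \<Longrightarrow> 0 \<in> adjoin S f"
  using const_in_adjoin[of 0] by simp

lemma generator_in_adjoin: "0 \<in> S \<Longrightarrow> 1 \<in> S \<Longrightarrow> f \<in> adjoin (S :: 'a::comm_semiring_1 set) f"
  unfolding adjoin_def
  by (rule CollectI, rule exI[of _ "[:0, 1:]"]) (simp add: coeff_pCons pcompose_pCons split: nat.split)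

lemma adjoin_diff:
  assumes "\<And>x y. x \<in> S \<Longrightarrow> y \<in> S \<Longrightarrow> x - y \<in> S" "p \<in> adjoin S f" "q \<in> adjoin S f"
  shows "p - q \<in> adjoin (S :: 'a::comm_ring set) f"
proof -
  obtain P Q where "p = pcompose P f" "\<forall>j. coeff P j \<in> S" "q = pcompose Q f" "\<forall>j. coeff Q j \<in> S"
    using assms(2,3) unfolding adjoin_def by blast
  with assms(1) show ?thesis
    unfolding adjoin_def by (intro CollectI exI[of _ "P - Q"]) (simp add: pcompose_diff)
qed

lemma adjoin_add_mult:
  assumes zero: "0 \<in> S" and add: "\<And>x y. x \<in> S \<Longrightarrow> y \<in> S \<Longrightarrow> x + y \<in> S"
    and mult: "\<And>x y. x \<in> S \<Longrightarrow> y \<in> S \<Longrightarrow> x * y \<in> S"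
    and "p \<in> adjoin S f" "q \<in> adjoin S f"
  shows "p + q \<in> adjoin S f" "p * q \<in> adjoin (S :: 'a::comm_semiring_0 set) f"
proof -
  obtain P Q where p: "p = pcompose P f" "\<forall>j. coeff P j \<in> S" and q: "q = pcompose Q f" "\<forall>j. coeff Q j \<in> S"
    using assms(4,5) unfolding adjoin_def by blast
  have sum: "sum g A \<in> S" if "\<And>i. i \<in> A \<Longrightarrow> g i \<in> S" for g and A :: "nat set"
    using that by (induction A rule: infinite_finite_induct) (simp_all add: zero add)
  show "p + q \<in> adjoin S f"
    unfolding adjoin_def using p q by (intro CollectI exI[of _ "P + Q"]) (simp add: add pcompose_add)
  show "p * q \<in> adjoin S f"
    unfolding adjoin_def using p q
    by (intro CollectI exI[of _ "P * Q"]) (simp add: coeff_mult sum mult pcompose_mult)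
qed

lemma adjoin_UNIV_subring:
  "0 \<in> adjoin UNIV h" "1 \<in> adjoin UNIV h"
  "x \<in> adjoin UNIV h \<Longrightarrow> y \<in> adjoin UNIV h \<Longrightarrow> x + y \<in> adjoin UNIV h"
  "x \<in> adjoin UNIV h \<Longrightarrow> y \<in> adjoin UNIV h \<Longrightarrow> x * y \<in> adjoin UNIV (h :: 'a::comm_semiring_1 poly)"
  using const_in_adjoin[of 1 UNIV h] adjoin_add_mult[of UNIV] by (simp_all add: one_pCons)

lemma coeffwise_pcompose_combination_exists:
  fixes h :: "'a::idom poly" and Q :: "'a poly poly"
  assumes monic: "lead_coeff h = 1" and deg: "degree h > 0"
  shows "\<exists>Q'. (\<forall>b j. coeff (Q' b) j \<in> adjoin UNIV h) \<and> Q = (\<Sum>b<degree h. [:monom 1 b:] * Q' b)"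
proof (induction Q)
  case 0
  show ?case
    by (rule exI[of _ "\<lambda>_. 0"]) simp
next
  case (pCons r Q)
  then obtain Q' where Q': "\<forall>b j. coeff (Q' b) j \<in> adjoin UNIV h" "Q = (\<Sum>b<degree h. [:monom 1 b:] * Q' b)"
    by blast
  obtain s where s: "r = pcompose_combination h s"
    using pcompose_combination_exists[OF monic deg] by blast
  have "pCons r Q = (\<Sum>b<degree h. [:monom 1 b:] * pCons (pcompose (s b) h) (Q' b))"
    by (rule poly_eqI) (simp add: s Q'(2) pcompose_combination_def coeff_sum coeff_pCons mult.commute split: nat.split)
  moreover have "\<forall>b j. coeff (pCons (pcompose (s b) h) (Q' b)) j \<in> adjoin UNIV h"
    using Q'(1) by (auto simp: coeff_pCons in_adjoin_UNIV split: nat.split)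
  ultimately show ?case
    by (intro exI[of _ "\<lambda>b. pCons (pcompose (s b) h) (Q' b)"]) simp
qed

lemma coeffwise_pcompose_combination_eq_0:
  fixes h :: "'a::idom poly" and Q :: "nat \<Rightarrow> 'a poly poly"
  assumes monic: "lead_coeff h = 1" and deg: "degree h > 0"
    and coeffs: "\<forall>b<degree h. \<forall>j. coeff (Q b) j \<in> adjoin UNIV h"
    and zero: "(\<Sum>b<degree h. [:monom 1 b:] * Q b) = 0" and "b < degree h"
  shows "Q b = 0"
proof (rule poly_eqI)
  fix j
  have "\<forall>b. \<exists>s. b < degree h \<longrightarrow> coeff (Q b) j = pcompose s h"
    using coeffs by (simp add: in_adjoin_UNIV)
  then obtain s where s: "\<And>b. b < degree h \<Longrightarrow> coeff (Q b) j = pcompose (s b) h"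
    by (metis choice)
  have "pcompose_combination h s = coeff (\<Sum>b<degree h. [:monom 1 b:] * Q b) j"
    by (simp add: pcompose_combination_def coeff_sum s)
  then have "s b = 0"
    using pcompose_combination_eq_0[OF monic deg] zero \<open>b < degree h\<close> by simp
  then show "coeff (Q b) j = coeff 0 j"
    using s \<open>b < degree h\<close> by simp
qed

lemma adjoin_adjoin_free_basis:
  fixes f :: "'a::idom poly poly" and h :: "'a poly"
  assumes monic_f: "lead_coeff f = 1" and deg_f: "degree f > 0"
    and monic_h: "lead_coeff h = 1" and deg_h: "degree h > 0"
  shows "free_basis (adjoin (adjoin UNIV h) f) ({..<degree f} \<times> {..<degree h})
           (\<lambda>(a, b). monom 1 a * [:monom 1 b:])"
proof (rule free_basisI)
  let ?B = "adjoin (adjoin UNIV h) f"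
  let ?e = "\<lambda>(a, b). monom 1 a * [:monom 1 b:]"
  have sum_e: "(\<Sum>i\<in>{..<degree f} \<times> {..<degree h}. pcompose (Q i) f * ?e i)
      = pcompose_combination f (\<lambda>a. \<Sum>b<degree h. [:monom 1 b:] * Q (a, b))" for Q
    by (simp add: pcompose_combination_def sum.cartesian_product' sum_distrib_left pcompose_sum pcompose_smult
        pcompose_mult ac_simps)
  show "x - y \<in> ?B" if "x \<in> ?B" "y \<in> ?B" for x y
    using that by (intro adjoin_diff) (auto simp: in_adjoin_UNIV pcompose_diff[symmetric])
  show "\<exists>c. (\<forall>i\<in>{..<degree f} \<times> {..<degree h}. c i \<in> ?B) \<and> p = (\<Sum>i\<in>{..<degree f} \<times> {..<degree h}. c i * ?e i)"
    for p
  proof -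
    obtain q where q: "p = pcompose_combination f q"
      using pcompose_combination_exists[OF monic_f deg_f] by blast
    have "\<forall>a. \<exists>Q'. (\<forall>b j. coeff (Q' b) j \<in> adjoin UNIV h) \<and> q a = (\<Sum>b<degree h. [:monom 1 b:] * Q' b)"
      using coeffwise_pcompose_combination_exists[OF monic_h deg_h] by blast
    from choice[OF this] obtain Q where
      "\<forall>a. (\<forall>b j. coeff (Q a b) j \<in> adjoin UNIV h) \<and> q a = (\<Sum>b<degree h. [:monom 1 b:] * Q a b)"
      by blast
    then have Q: "\<And>a b j. coeff (Q a b) j \<in> adjoin UNIV h"
      "\<And>a. q a = (\<Sum>b<degree h. [:monom 1 b:] * Q a b)"
      by simp_all
    show ?thesis
    proof (rule exI[of _ "\<lambda>i. pcompose (case_prod Q i) f"], intro conjI ballI)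
      show "pcompose (case_prod Q i) f \<in> ?B" for i
        using Q(1) unfolding adjoin_def by (auto split: prod.split)
      show "p = (\<Sum>i\<in>{..<degree f} \<times> {..<degree h}. pcompose (case_prod Q i) f * ?e i)"
        unfolding sum_e q by (simp add: Q(2) pcompose_combination_def)
    qed
  qed
  show "c i = 0" if c_in: "\<forall>i\<in>{..<degree f} \<times> {..<degree h}. c i \<in> ?B"
    and sum_0: "(\<Sum>i\<in>{..<degree f} \<times> {..<degree h}. c i * ?e i) = 0"
    and i_in: "i \<in> {..<degree f} \<times> {..<degree h}"
    for c i
  proof -
    have "\<forall>i\<in>{..<degree f} \<times> {..<degree h}. \<exists>Q. c i = pcompose Q f \<and> (\<forall>j. coeff Q j \<in> adjoin UNIV h)"
      using c_in unfolding adjoin_def by blast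
    from bchoice[OF this] obtain Q where Q: "\<And>i. i \<in> {..<degree f} \<times> {..<degree h} \<Longrightarrow>
        c i = pcompose (Q i) f \<and> (\<forall>j. coeff (Q i) j \<in> adjoin UNIV h)"
      by blast
    obtain a b where i: "i = (a, b)" "a < degree f" "b < degree h"
      using i_in by blast
    have "(\<Sum>i\<in>{..<degree f} \<times> {..<degree h}. pcompose (Q i) f * ?e i) = 0"
      using sum_0 Q by (simp cong: sum.cong)
    then have "pcompose_combination f (\<lambda>a. \<Sum>b<degree h. [:monom 1 b:] * Q (a, b)) = 0"
      by (simp only: sum_e)
    then have "(\<Sum>b<degree h. [:monom 1 b:] * Q (a, b)) = 0"
      by (rule pcompose_combination_eq_0[OF monic_f deg_f _ \<open>a < degree f\<close>])
    moreover have "\<forall>b<degree h. \<forall>j. coeff (Q (a, b)) j \<in> adjoin UNIV h"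
      using Q \<open>a < degree f\<close> by simp
    ultimately have "Q (a, b) = 0"
      using coeffwise_pcompose_combination_eq_0[OF monic_h deg_h, where Q="\<lambda>b. Q (a, b)"] i(3) by blast
    then show "c i = 0"
      using Q[of i] i by simp
  qed
qed

section \<open>Polynomials in three variables\<close>

lemma is_ring_hom_subst3: "is_ring_hom (\<lambda>p::'k::comm_ring_1 mpoly3. subst3 p a b c)"
proof -
  have "is_ring_hom (cst3 :: 'k \<Rightarrow> 'k mpoly3)"
    unfolding is_ring_hom_def cst3_def by (simp add: one_pCons)
  then show ?thesis
    unfolding subst3_def by (intro is_ring_hom_eval_map_poly)
qed

lemma subst3_cst3 [simp]: "subst3 (cst3 r) a b c = cst3 r"
  by (simp add: subst3_def map_poly_pCons cst3_def)

lemma subst3_X [simp]: "subst3 X1 a b c = a" "subst3 X2 a b c = b" "subst3 X3 a b c = c"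
  by (simp_all add: subst3_def map_poly_pCons cst3_def X1_def X2_def X3_def one_pCons[symmetric])

lemma gen_alg_0 [simp]: "0 \<in> gen_alg f g h"
  using gen_alg.cst[of 0 f g h] by (simp add: cst3_def)

lemma gen_alg_image:
  assumes "is_ring_hom \<phi>" "\<And>r. \<phi> (cst3 r) = cst3 r"
  shows "p \<in> gen_alg f g h \<Longrightarrow> \<phi> p \<in> gen_alg (\<phi> f) (\<phi> g) (\<phi> h)"
  by (induction rule: gen_alg.induct) (simp_all add: assms is_ring_homD[OF assms(1)] gen_alg.intros)

lemma gen_alg_fixed:
  assumes "is_ring_hom \<phi>" "\<And>r. \<phi> (cst3 r) = cst3 r" "\<phi> f = f" "\<phi> g = g" "\<phi> h = h"
  shows "p \<in> gen_alg f g h \<Longrightarrow> \<phi> p = p"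
  by (induction rule: gen_alg.induct) (simp_all add: assms is_ring_homD[OF assms(1)])

lemma inner_const_in_gen_alg:
  assumes "X1 \<in> gen_alg f g h"
  shows "[:[:r:]:] \<in> gen_alg f g h"
proof (induction r)
  case (pCons a r)
  have "[:[:pCons a r:]:] = cst3 a + X1 * [:[:r:]:]"
    by (simp add: cst3_def X1_def)
  then show ?case
    by (metis assms gen_alg.add gen_alg.cst gen_alg.mult pCons.IH)
qed simp

lemma middle_pcompose_in_gen_alg:
  assumes "X1 \<in> gen_alg f g h" "[:H:] \<in> gen_alg f g h"
  shows "[:pcompose s H:] \<in> gen_alg f g h"
proof (induction s)
  case (pCons r s)
  have "[:pcompose (pCons r s) H:] = [:[:r:]:] + [:H:] * [:pcompose s H:]"
    by (simp add: pcompose_pCons)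
  then show ?case
    by (metis assms gen_alg.add gen_alg.mult inner_const_in_gen_alg pCons.IH)
qed simp

lemma pcompose_in_gen_alg:
  assumes "N \<in> gen_alg f g h" "\<And>j. [:coeff Q j:] \<in> gen_alg f g h"
  shows "pcompose Q N \<in> gen_alg f g h"
  using assms(2)
proof (induction Q)
  case (pCons r Q)
  have "[:r:] \<in> gen_alg f g h" "pcompose Q N \<in> gen_alg f g h"
    using pCons.prems[of 0] pCons.IH pCons.prems[of "Suc _"] by simp_all
  then show ?case
    unfolding pcompose_pCons by (metis assms(1) gen_alg.add gen_alg.mult)
qed simp

lemma gen_alg_X1_X2_X3: "p \<in> gen_alg X1 X2 (X3 :: 'k::comm_ring_1 mpoly3)"
proof -
  have "[:q:] \<in> gen_alg X1 X2 (X3 :: 'k mpoly3)" for q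
    using middle_pcompose_in_gen_alg[of X1 X2 X3 "[:0, 1:]" q] by (simp add: X2_def gen_alg.intros)
  then have "pcompose p X3 \<in> gen_alg X1 X2 X3"
    by (intro pcompose_in_gen_alg gen_alg.gen3)
  then show ?thesis
    by (simp add: X3_def)
qed

lemma is_ring_hom_fixing_generators:
  assumes "is_ring_hom \<phi>" "\<And>r. \<phi> (cst3 r) = cst3 r" "\<phi> X1 = X1" "\<phi> X2 = X2" "\<phi> X3 = X3"
  shows "\<phi> p = (p :: 'k::comm_ring_1 mpoly3)"
  using gen_alg_fixed[OF assms gen_alg_X1_X2_X3] .

lemma gen_alg_subset_adjoin: "gen_alg N [:H:] X1 \<subseteq> adjoin (adjoin UNIV H) (N :: 'k::comm_ring_1 mpoly3)"
proof
  fix p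
  assume "p \<in> gen_alg N [:H:] X1"
  then show "p \<in> adjoin (adjoin UNIV H) N"
  proof (induction rule: gen_alg.induct)
    case (cst c)
    show ?case
      unfolding cst3_def by (intro const_in_adjoin adjoin_UNIV_subring) simp_all
  next
    case gen1
    show ?case
      by (simp add: generator_in_adjoin adjoin_UNIV_subring)
  next
    case gen2
    show ?case
      by (intro const_in_adjoin generator_in_adjoin adjoin_UNIV_subring) simp_all
  next
    case gen3
    show ?case
      unfolding X1_def by (intro const_in_adjoin adjoin_UNIV_subring) simp_all
  qed (simp_all add: adjoin_add_mult adjoin_UNIV_subring)
qed

lemma gen_alg_eq_adjoin: "gen_alg N [:H:] X1 = adjoin (adjoin UNIV H) (N :: 'k::comm_ring_1 mpoly3)"
proof
  show "adjoin (adjoin UNIV H) N \<subseteq> gen_alg N [:H:] X1"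
  proof
    fix p
    assume "p \<in> adjoin (adjoin UNIV H) N"
    then obtain Q where p: "p = pcompose Q N" and Q: "\<forall>j. coeff Q j \<in> adjoin UNIV H"
      unfolding adjoin_def by blast
    have "[:coeff Q j:] \<in> gen_alg N [:H:] X1" for j
    proof -
      obtain s where "coeff Q j = pcompose s H"
        using Q by (auto simp: in_adjoin_UNIV)
      then show ?thesis
        using middle_pcompose_in_gen_alg[of N "[:H:]" X1 H s] by (simp add: gen_alg.intros)
    qed
    then show "p \<in> gen_alg N [:H:] X1"
      unfolding p by (intro pcompose_in_gen_alg gen_alg.gen1)
  qed
qed (rule gen_alg_subset_adjoin)

lemma is_ring_hom_sigma: "is_ring_hom (sigma :: 'k::comm_ring_1 mpoly3 \<Rightarrow> _)"
  unfolding sigma_def[abs_def] by (rule is_ring_hom_subst3)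

lemma sigma_cst3 [simp]: "sigma (cst3 r) = cst3 r"
  and sigma_X [simp]: "sigma X1 = X1 + X2" "sigma X2 = X2 + X3" "sigma X3 = X3"
  by (simp_all add: sigma_def)

lemmas sigma_add_mult = is_ring_homD(1-3)[OF is_ring_hom_sigma]

lemma sigma_order_4:
  fixes p :: "'k::comm_ring_1 mpoly3"
  assumes "CHAR('k) = 2"
  shows "sigma (sigma (sigma (sigma p))) = p"
proof -
  have char: "CHAR('k mpoly3) = 2"
    using assms by simp
  show ?thesis
    using is_ring_hom_fixing_generators[of "sigma \<circ> sigma \<circ> sigma \<circ> sigma" p]
    by (simp add: is_ring_hom_comp is_ring_hom_sigma sigma_add_mult two_eq_zero_CHAR_2[OF char])
qed

lemma Delta_Delta:
  fixes p :: "'k::comm_ring_1 mpoly3"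
  assumes "CHAR('k) = 2"
  shows "Delta (Delta p) = sigma (sigma p) + p"
proof -
  have char: "CHAR('k mpoly3) = 2"
    using assms by simp
  have "Delta q = sigma q + q" for q :: "'k mpoly3"
    by (simp add: Delta_def minus_CHAR_2[OF char])
  then show ?thesis
    by (simp add: sigma_add_mult two_eq_zero_CHAR_2[OF char])
qed

lemma K_4_eq_UNIV:
  assumes "CHAR('k::comm_ring_1) = 2"
  shows "K 4 = (UNIV :: 'k mpoly3 set)"
proof -
  have "(Delta ^^ 4) p = 0" for p :: "'k mpoly3"
    using two_eq_zero_CHAR_2[where 'a="'k mpoly3"] assms
    by (simp add: eval_nat_numeral Delta_Delta sigma_add_mult sigma_order_4)
  then show ?thesis
    by (auto simp: K_def)
qed

text \<open>Exchanging \<open>x\<^sub>1\<close> and \<open>x\<^sub>3\<close> makes the variable in which \<open>N\<^sup>G(x\<^sub>1)\<close> is monic the outermost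
  one of the nested representation \<open>'k poly poly poly\<close>.\<close>

definition swap13 :: "'k::comm_ring_1 mpoly3 \<Rightarrow> 'k mpoly3" where
  "swap13 p = subst3 p X3 X2 X1"

lemma is_ring_hom_swap13: "is_ring_hom (swap13 :: 'k::comm_ring_1 mpoly3 \<Rightarrow> _)"
  unfolding swap13_def[abs_def] by (rule is_ring_hom_subst3)

lemma swap13_cst3 [simp]: "swap13 (cst3 r) = cst3 r"
  and swap13_X [simp]: "swap13 X1 = X3" "swap13 X2 = X2" "swap13 X3 = X1"
  by (simp_all add: swap13_def)

lemma swap13_swap13 [simp]: "swap13 (swap13 p) = p"
  using is_ring_hom_fixing_generators[of "swap13 \<circ> swap13"]
  by (simp add: is_ring_hom_comp is_ring_hom_swap13)

lemma swap13_image_gen_alg: "swap13 ` gen_alg f g h = gen_alg (swap13 f) (swap13 g) (swap13 h)"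
proof
  show "swap13 ` gen_alg f g h \<subseteq> gen_alg (swap13 f) (swap13 g) (swap13 h)"
    using gen_alg_image[OF is_ring_hom_swap13 swap13_cst3] by blast
  show "gen_alg (swap13 f) (swap13 g) (swap13 h) \<subseteq> swap13 ` gen_alg f g h"
  proof
    fix p
    assume "p \<in> gen_alg (swap13 f) (swap13 g) (swap13 h)"
    then have "swap13 p \<in> gen_alg f g h"
      using gen_alg_image[OF is_ring_hom_swap13 swap13_cst3] by fastforce
    then show "p \<in> swap13 ` gen_alg f g h"
      by (metis image_eqI swap13_swap13)
  qed
qed

section \<open>The basis of \<open>k[V]\<close> over \<open>A\<close>\<close>

lemma norm_x1_CHAR_2:
  assumes "CHAR('k::comm_ring_1) = 2"
  shows "(norm_x1 :: 'k mpoly3) = X1 * (X1 + X2) * (X1 + X3) * (X1 + X2 + X3)"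
proof -
  have "(2 :: 'k mpoly3) = 0"
    using assms by (simp add: two_eq_zero_CHAR_2)
  then show ?thesis
    by (simp add: norm_x1_def eval_nat_numeral prod.lessThan_Suc sigma_add_mult algebra_simps)
qed

lemma swap13_norm_x1_monic:
  assumes "CHAR('k::idom) = 2"
  shows "lead_coeff (swap13 norm_x1 :: 'k mpoly3) = 1" "degree (swap13 norm_x1 :: 'k mpoly3) = 4"
proof -
  have "swap13 (norm_x1 :: 'k mpoly3) = X3 * (X3 + X2) * (X3 + X1) * (X3 + X2 + X1)"
    by (simp add: norm_x1_CHAR_2[OF assms] is_ring_homD[OF is_ring_hom_swap13])
  then show "lead_coeff (swap13 norm_x1 :: 'k mpoly3) = 1" "degree (swap13 norm_x1 :: 'k mpoly3) = 4"
    by (simp_all add: X1_def X2_def X3_def lead_coeff_mult degree_mult_eq)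
qed

lemma swap13_X2_mult_X2_add_X3: "swap13 (X2 * (X2 + X3)) = [:[:0, 1:] * [:[:0, 1:], 1:]:]"
  by (simp only: is_ring_homD(1,2)[OF is_ring_hom_swap13] swap13_X) (simp add: X1_def X2_def)

lemma bij_swap13: "bij swap13"
  unfolding bij_def inj_def surj_def by (metis swap13_swap13)

lemma swap13_monom_monom: "swap13 (monom 1 a * [:monom 1 b:]) = X1 ^ a * X2 ^ b"
proof -
  have "monom 1 a * [:monom 1 b:] = X3 ^ a * (X2 ^ b :: 'a::comm_ring_1 mpoly3)"
    by (simp add: X2_def X3_def monom_altdef poly_const_pow)
  then show ?thesis
    by (simp add: is_ring_homD(2)[OF is_ring_hom_swap13] is_ring_hom_power[OF is_ring_hom_swap13])
qed

definition basis8_exponents :: "nat \<Rightarrow> nat \<times> nat" where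
  "basis8_exponents i = [(0, 0), (1, 0), (0, 1), (2, 0), (1, 1), (3, 0), (2, 1), (3, 1)] ! i"

lemma lessThan_8: "{..<8 :: nat} = {0, 1, 2, 3, 4, 5, 6, 7}"
  by (simp add: lessThan_nat_numeral lessThan_Suc insert_commute)

lemma bij_betw_basis8_exponents: "bij_betw basis8_exponents {..<8} ({..<4} \<times> {..<2})"
proof (rule bij_betw_imageI)
  show "inj_on basis8_exponents {..<8}"
    unfolding inj_on_def lessThan_8 by (simp add: basis8_exponents_def)
  show "basis8_exponents ` {..<8} = {..<4} \<times> {..<2}"
    unfolding lessThan_8 by (simp add: basis8_exponents_def lessThan_nat_numeral lessThan_Suc insert_commute)
qed

lemma basis8_nth:
  assumes "i < 8"
  shows "basis8 ! i = (case basis8_exponents i of (a, b) \<Rightarrow> X1 ^ a * X2 ^ b)"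
proof -
  have "i \<in> {0, 1, 2, 3, 4, 5, 6, 7}"
    using assms lessThan_8 by blast
  then show ?thesis
    by (elim insertE emptyE) (simp_all add: basis8_def basis8_exponents_def)
qed

lemma algA_free_basis:
  assumes "CHAR('k::field) = 2"
  shows "free_basis (algA :: 'k mpoly3 set) {..<8} (\<lambda>i. basis8 ! i)"
proof -
  let ?N = "swap13 norm_x1 :: 'k mpoly3" and ?H = "[:0, 1:] * [:[:0, 1:], 1:] :: 'k poly poly"
  have H: "lead_coeff ?H = 1" "degree ?H = 2"
    by (simp_all add: lead_coeff_mult degree_mult_eq)
  have "free_basis (adjoin (adjoin UNIV ?H) ?N) ({..<degree ?N} \<times> {..<degree ?H})
      (\<lambda>(a, b). monom 1 a * [:monom 1 b:])"
    by (rule adjoin_adjoin_free_basis) (use H swap13_norm_x1_monic[OF assms] in auto)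
  then have "free_basis (gen_alg ?N [:?H:] X1) ({..<4} \<times> {..<2}) (\<lambda>(a, b). monom 1 a * [:monom 1 b:])"
    by (simp only: H swap13_norm_x1_monic[OF assms] gen_alg_eq_adjoin)
  from free_basis_image[OF this is_ring_hom_swap13 bij_swap13]
  have "free_basis (algA :: 'k mpoly3 set) ({..<4} \<times> {..<2})
      (\<lambda>i. swap13 (case i of (a, b) \<Rightarrow> monom 1 a * [:monom 1 b:]))"
    by (simp only: algA_def swap13_image_gen_alg swap13_X2_mult_X2_add_X3[symmetric] swap13_swap13 swap13_X)
  then show ?thesis
    by (rule free_basis_reindex[OF _ bij_betw_basis8_exponents])
      (simp only: lessThan_iff basis8_nth prod.case_distrib[of swap13] swap13_monom_monom)
qed

theorem proposition4p19:
  fixes dummy :: "'k::field itself"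
  assumes "CHAR('k) = 2"
  shows "K 4 = (UNIV :: 'k mpoly3 set) \<and>
    (\<forall>p \<in> (K 4 :: 'k mpoly3 set). \<exists>!c :: nat \<Rightarrow> 'k mpoly3.
        (\<forall>i<8. c i \<in> algA) \<and> (\<forall>i\<ge>8. c i = 0) \<and>
        p = (\<Sum>i<8. c i * basis8 ! i))"
  using K_4_eq_UNIV[OF assms] algA_free_basis[OF assms] by (simp add: free_basis_def not_less Ball_def)

end
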